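(* Let $n\ge 3$ and $m\ge 5$ be integers, let $\delta\in\{0,\dots,n-1\}$ with $\gcd(1+\delta,n)=1$, and let $G=\langle x\rangle$ be cyclic of order $n$. Let $\Delta$ be the graph with vertex set $G\times\{0,\dots,m-1\}$ (write $g_i=(g,i)$, $G_i=G\times\{i\}$) whose edges are exactly the following: there are no edges inside $G_0$ or inside $G_3$; $G_1$ and $G_2$ each induce complete graphs; for $i\in\{4,\dots,m-1\}$ the edges inside $G_i$ are $\{g_i,(xg)_i\}$, $g\in G$; $g_0\sim g'_2$ iff $g\ne g'$; $g_2\sim g'_3$ iff $g=g'$; $g_3\sim g'_{m-1}$ iff $g\ne g'$; $g_1\sim g'_4$ iff $g\ne g'$; for $\ell\in\{4,\dots,m-2\}$, $g_\ell\sim g'_{\ell+1}$ iff $g\ne g'$; $g_0\sim g'_3$ for all $g,g'$; $g_0\sim g'_1$ iff $g'g^{-1}=x$; $g_1\sim g'_2$ iff $g'g^{-1}=x^\delta$. Identifying each $g\in G$ with the permutation $y_i\mapsto(yg)_i$ of the vertex set, $\mathrm{Aut}(\Delta)=G$. Consequently, every cyclic group of order at least $3$ admits an $m$-GRR for every $m\ge 5$.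
   Context: An $m$-GRR for a group $G$ is a finite regular simple graph having a semiregular group of automorphisms isomorphic to $G$ with exactly $m$ vertex-orbits and whose full automorphism group is isomorphic to $G$. *)

theory Defs
  imports "HOL-Algebra.Algebra"
begin

definition simple_graph :: "'v set \<Rightarrow> ('v \<Rightarrow> 'v \<Rightarrow> bool) \<Rightarrow> bool" where
  "simple_graph V E \<longleftrightarrow> finite V \<and> (\<forall>u v. E u v \<longrightarrow> u \<in> V \<and> v \<in> V)
     \<and> (\<forall>u v. E u v \<longrightarrow> E v u) \<and> (\<forall>v. \<not> E v v)"

definition regular_graph :: "'v set \<Rightarrow> ('v \<Rightarrow> 'v \<Rightarrow> bool) \<Rightarrow> bool" where
  "regular_graph V E \<longleftrightarrow> (\<exists>k. \<forall>v\<in>V. card {u \<in> V. E v u} = k)"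

definition graph_auts :: "'v set \<Rightarrow> ('v \<Rightarrow> 'v \<Rightarrow> bool) \<Rightarrow> ('v \<Rightarrow> 'v) set" where
  "graph_auts V E = {f \<in> Bij V. \<forall>u\<in>V. \<forall>v\<in>V. E (f u) (f v) \<longleftrightarrow> E u v}"

definition Aut_group :: "'v set \<Rightarrow> ('v \<Rightarrow> 'v \<Rightarrow> bool) \<Rightarrow> ('v \<Rightarrow> 'v) monoid" where
  "Aut_group V E = (BijGroup V)\<lparr>carrier := graph_auts V E\<rparr>"

definition semiregular_on :: "'v set \<Rightarrow> ('v \<Rightarrow> 'v) set \<Rightarrow> bool" where
  "semiregular_on V H \<longleftrightarrow> (\<forall>h\<in>H. \<forall>v\<in>V. h v = v \<longrightarrow> h = (\<lambda>x\<in>V. x))"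

definition is_mGRR :: "nat \<Rightarrow> ('a, 'b) monoid_scheme \<Rightarrow> 'v set \<Rightarrow> ('v \<Rightarrow> 'v \<Rightarrow> bool) \<Rightarrow> bool" where
  "is_mGRR m G V E \<longleftrightarrow> simple_graph V E \<and> regular_graph V E \<and>
     (\<exists>H. subgroup H (Aut_group V E) \<and> semiregular_on V H \<and>
          card (orbits ((Aut_group V E)\<lparr>carrier := H\<rparr>) V (\<lambda>h v. h v)) = m \<and>
          (Aut_group V E)\<lparr>carrier := H\<rparr> \<cong> G) \<and>
     Aut_group V E \<cong> G"

text \<open>G = <x> cyclic of order n is modelled as Z/nZ = {0..<n} with x = 1 (additively);
  the vertex (g,i) is g_i. Delta_rel lists each edge {(a,i),(b,j)} with i \<le> j.\<close>

definition Delta_rel :: "nat \<Rightarrow> nat \<Rightarrow> nat \<Rightarrow> nat \<times> nat \<Rightarrow> nat \<times> nat \<Rightarrow> bool" where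
  "Delta_rel n m \<delta> u v = (case (u, v) of ((a, i), (b, j)) \<Rightarrow>
     a < n \<and> b < n \<and> i < m \<and> j < m \<and>
     ((i = 1 \<and> j = 1 \<and> a \<noteq> b) \<or>
      (i = 2 \<and> j = 2 \<and> a \<noteq> b) \<or>
      (4 \<le> i \<and> i = j \<and> b = (a + 1) mod n) \<or>
      (i = 0 \<and> j = 2 \<and> a \<noteq> b) \<or>
      (i = 2 \<and> j = 3 \<and> a = b) \<or>
      (i = 3 \<and> j = m - 1 \<and> a \<noteq> b) \<or>
      (i = 1 \<and> j = 4 \<and> a \<noteq> b) \<or>
      (4 \<le> i \<and> i \<le> m - 2 \<and> j = i + 1 \<and> a \<noteq> b) \<or>
      (i = 0 \<and> j = 3) \<or>
      (i = 0 \<and> j = 1 \<and> b = (a + 1) mod n) \<or>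
      (i = 1 \<and> j = 2 \<and> b = (a + \<delta>) mod n)))"

definition Delta_adj :: "nat \<Rightarrow> nat \<Rightarrow> nat \<Rightarrow> nat \<times> nat \<Rightarrow> nat \<times> nat \<Rightarrow> bool" where
  "Delta_adj n m \<delta> u v \<longleftrightarrow> Delta_rel n m \<delta> u v \<or> Delta_rel n m \<delta> v u"

definition Delta_verts :: "nat \<Rightarrow> nat \<Rightarrow> (nat \<times> nat) set" where
  "Delta_verts n m = {0..<n} \<times> {0..<m}"

definition right_transl :: "nat \<Rightarrow> nat \<Rightarrow> nat \<Rightarrow> nat \<times> nat \<Rightarrow> nat \<times> nat" where
  "right_transl n m g = (\<lambda>(y, i) \<in> Delta_verts n m. ((y + g) mod n, i))"

end

(* Every automorphism of Delta fixes each layer G_i = G x {i} setwise, because the layers can be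
   recognised inside the graph: G_0 and G_3 together are the vertices on edges lying in no
   triangle (the edges g_0 ~ g'_3), G_1 consists of the other vertices with exactly one
   neighbour there, G_0 is the part of G_0 u G_3 adjacent to G_1, G_2 is the rest of the
   neighbourhood of G_0, and G_4, G_5, ..., G_(m-1) follow one by one, each consisting of the
   vertices not yet placed that are adjacent to its predecessor on the path G_1, G_4, ...,
   G_(m-1).  So an automorphism acts on G_i by a permutation s_i of G.  Two layers joined by the
   relation "g ~ g' iff g <> g'" (or "iff g = g'") carry the same permutation, and these
   relations connect all layers, so all s_i agree; the matching g_0 ~ (xg)_1 then forces
   s(xg) = x s(g), i.e. the automorphism is a right translation.
   For the second claim take delta = 0 and n = |G|: Delta is regular of valency 2n, the right
   translations act semiregularly with m orbits, and transporting Delta to G x {0..m-1} along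
   k |-> x^k gives an m-GRR for the cyclic group G = <x>. *)

theory Submission
  imports Defs
begin

lemma mod_add_right_cancel_less:
  fixes a b k n :: nat
  assumes "a < n" "b < n"
  shows "(a + k) mod n = (b + k) mod n \<longleftrightarrow> a = b"
proof
  have le_case: "a = b" if "a \<le> b" "b < n" "(a + k) mod n = (b + k) mod n" for a b
  proof -
    have "n dvd b - a"
      using that mod_eq_dvd_iff_nat[of "a + k" "b + k" n] by simp
    moreover have "b - a < n" using that by simp
    ultimately have "b - a = 0" using nat_dvd_not_less by blast
    then show "a = b" using that by simp
  qed
  show "(a + k) mod n = (b + k) mod n \<Longrightarrow> a = b"
    using le_case[of a b] le_case[of b a] assms by linarith
qed simp

lemma mod_add_neq_self:
  fixes a k n :: nat
  assumes "0 < k" "k < n" "a < n"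
  shows "(a + k) mod n \<noteq> a"
  using mod_add_right_cancel_less[of k n 0 a] assms by (simp add: add.commute)

lemma mod_add_eq_iff_sub:
  fixes a b k n :: nat
  assumes "a < n" "b < n" "k \<le> n"
  shows "b = (a + k) mod n \<longleftrightarrow> a = (b + (n - k)) mod n"
proof -
  have shift_back: "((c + j) mod n + (n - j)) mod n = c" if "c < n" "j \<le> n" for c j
  proof -
    have "((c + j) mod n + (n - j)) mod n = (c + j + (n - j)) mod n"
      by (rule mod_add_left_eq)
    also have "c + j + (n - j) = c + n" using that by simp
    finally show ?thesis using that by simp
  qed
  show ?thesis
    using shift_back[of a k] shift_back[of b "n - k"] assms by auto
qed

lemma mod_add_shift_eq_iff:
  fixes a b g k n :: nat
  assumes "a < n" "b < n"
  shows "(b + g) mod n = ((a + g) mod n + k) mod n \<longleftrightarrow> b = (a + k) mod n"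
proof -
  have "((a + g) mod n + k) mod n = (a + g + k) mod n"
    by (rule mod_add_left_eq)
  also have "a + g + k = a + k + g"
    by simp
  also have "(a + k + g) mod n = ((a + k) mod n + g) mod n"
    by (rule mod_add_left_eq[symmetric])
  finally have "((a + g) mod n + k) mod n = ((a + k) mod n + g) mod n" .
  moreover have "(a + k) mod n < n" using assms by simp
  ultimately show ?thesis
    using mod_add_right_cancel_less[of b n "(a + k) mod n" g] assms by simp
qed

section \<open>Graph automorphisms and invariant vertex sets\<close>

lemma graph_auts_bij_betw: "f \<in> graph_auts V E \<Longrightarrow> bij_betw f V V"
  by (simp add: graph_auts_def Bij_def)

lemma graph_auts_extensional: "f \<in> graph_auts V E \<Longrightarrow> f \<in> extensional V"
  by (simp add: graph_auts_def Bij_def)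

lemma graph_auts_closed: "f \<in> graph_auts V E \<Longrightarrow> v \<in> V \<Longrightarrow> f v \<in> V"
  using graph_auts_bij_betw bij_betwE by blast

lemma graph_auts_adj_iff:
  "f \<in> graph_auts V E \<Longrightarrow> u \<in> V \<Longrightarrow> v \<in> V \<Longrightarrow> E (f u) (f v) \<longleftrightarrow> E u v"
  by (simp add: graph_auts_def)

lemma bij_betw_bex_iff: "bij_betw f A A \<Longrightarrow> (\<exists>u\<in>A. P (f u)) \<longleftrightarrow> (\<exists>u\<in>A. P u)"
  using bij_betw_imp_surj_on by (metis bex_simps(7))

lemma bij_betw_bex1_iff:
  assumes "bij_betw f A A"
  shows "(\<exists>!u\<in>A. P (f u)) \<longleftrightarrow> (\<exists>!u\<in>A. P u)"
proof -
  have "(\<exists>!u\<in>A. P (f u)) \<longleftrightarrow> (\<exists>!v\<in>f ` A. P v)"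
    using bij_betw_imp_inj_on[OF assms] unfolding bex1_def by (auto simp: inj_on_eq_iff)
  then show ?thesis using bij_betw_imp_surj_on[OF assms] by simp
qed

definition aut_invariant :: "'v set \<Rightarrow> ('v \<Rightarrow> 'v \<Rightarrow> bool) \<Rightarrow> 'v set \<Rightarrow> bool" where
  "aut_invariant V E A \<longleftrightarrow> A \<subseteq> V \<and> (\<forall>f\<in>graph_auts V E. \<forall>v\<in>V. f v \<in> A \<longleftrightarrow> v \<in> A)"

lemma aut_invariantD:
  "aut_invariant V E A \<Longrightarrow> f \<in> graph_auts V E \<Longrightarrow> v \<in> V \<Longrightarrow> f v \<in> A \<longleftrightarrow> v \<in> A"
  by (simp add: aut_invariant_def)

lemma aut_invariant_bij_betw:
  assumes "aut_invariant V E A" "f \<in> graph_auts V E"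
  shows "bij_betw f A A"
proof -
  have "A \<subseteq> V" using assms(1) by (simp add: aut_invariant_def)
  moreover have "f ` A = A"
  proof
    show "f ` A \<subseteq> A" using \<open>A \<subseteq> V\<close> aut_invariantD[OF assms] by auto
    show "A \<subseteq> f ` A"
    proof
      fix u assume "u \<in> A"
      then obtain v where "v \<in> V" "u = f v"
        using \<open>A \<subseteq> V\<close> bij_betw_imp_surj_on[OF graph_auts_bij_betw[OF assms(2)]] by blast
      then show "u \<in> f ` A" using \<open>u \<in> A\<close> aut_invariantD[OF assms] by blast
    qed
  qed
  ultimately show ?thesis
    using bij_betw_imp_inj_on[OF graph_auts_bij_betw[OF assms(2)]] by (simp add: bij_betw_def inj_on_subset)
qed

lemma aut_invariant_Un:
  "aut_invariant V E A \<Longrightarrow> aut_invariant V E B \<Longrightarrow> aut_invariant V E (A \<union> B)"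
  by (auto simp: aut_invariant_def)

lemma aut_invariant_Int:
  "aut_invariant V E A \<Longrightarrow> aut_invariant V E B \<Longrightarrow> aut_invariant V E (A \<inter> B)"
  by (auto simp: aut_invariant_def)

lemma aut_invariant_Diff:
  "aut_invariant V E A \<Longrightarrow> aut_invariant V E B \<Longrightarrow> aut_invariant V E (A - B)"
  by (auto simp: aut_invariant_def)

lemma aut_invariant_UN:
  "(\<And>i. i \<in> I \<Longrightarrow> aut_invariant V E (A i)) \<Longrightarrow> aut_invariant V E (\<Union>i\<in>I. A i)"
  by (auto simp: aut_invariant_def)

definition adj_set :: "'v set \<Rightarrow> ('v \<Rightarrow> 'v \<Rightarrow> bool) \<Rightarrow> 'v set \<Rightarrow> 'v set" where
  "adj_set V E A = {v \<in> V. \<exists>u\<in>A. E v u}"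

definition uniquely_adj_set :: "'v set \<Rightarrow> ('v \<Rightarrow> 'v \<Rightarrow> bool) \<Rightarrow> 'v set \<Rightarrow> 'v set" where
  "uniquely_adj_set V E A = {v \<in> V. \<exists>!u\<in>A. E v u}"

definition triangle_free_edge_verts :: "'v set \<Rightarrow> ('v \<Rightarrow> 'v \<Rightarrow> bool) \<Rightarrow> 'v set" where
  "triangle_free_edge_verts V E = {v \<in> V. \<exists>u\<in>V. E v u \<and> \<not> (\<exists>w\<in>V. E v w \<and> E u w)}"

lemma aut_invariant_adj_set:
  assumes A: "aut_invariant V E A"
  shows "aut_invariant V E (adj_set V E A)"
  unfolding aut_invariant_def
proof (intro conjI ballI)
  fix f v assume f: "f \<in> graph_auts V E" and v: "v \<in> V"
  have "A \<subseteq> V" using A by (simp add: aut_invariant_def)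
  have "(\<exists>u\<in>A. E (f v) u) \<longleftrightarrow> (\<exists>u\<in>A. E (f v) (f u))"
    using bij_betw_bex_iff[OF aut_invariant_bij_betw[OF A f]] by simp
  also have "\<dots> \<longleftrightarrow> (\<exists>u\<in>A. E v u)"
    using \<open>A \<subseteq> V\<close> v graph_auts_adj_iff[OF f] by blast
  finally show "f v \<in> adj_set V E A \<longleftrightarrow> v \<in> adj_set V E A"
    using v graph_auts_closed[OF f v] by (simp add: adj_set_def)
qed (auto simp: adj_set_def)

lemma aut_invariant_uniquely_adj_set:
  assumes A: "aut_invariant V E A"
  shows "aut_invariant V E (uniquely_adj_set V E A)"
  unfolding aut_invariant_def
proof (intro conjI ballI)
  fix f v assume f: "f \<in> graph_auts V E" and v: "v \<in> V"
  have "A \<subseteq> V" using A by (simp add: aut_invariant_def)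
  have "(\<exists>!u\<in>A. E (f v) u) \<longleftrightarrow> (\<exists>!u\<in>A. E (f v) (f u))"
    using bij_betw_bex1_iff[OF aut_invariant_bij_betw[OF A f]] by simp
  also have "\<dots> \<longleftrightarrow> (\<exists>!u\<in>A. E v u)"
    using \<open>A \<subseteq> V\<close> v graph_auts_adj_iff[OF f] by (metis subsetD)
  finally show "f v \<in> uniquely_adj_set V E A \<longleftrightarrow> v \<in> uniquely_adj_set V E A"
    using v graph_auts_closed[OF f v] by (simp add: uniquely_adj_set_def)
qed (auto simp: uniquely_adj_set_def)

lemma aut_invariant_triangle_free_edge_verts:
  "aut_invariant V E (triangle_free_edge_verts V E)"
  unfolding aut_invariant_def
proof (intro conjI ballI)
  fix f v assume f: "f \<in> graph_auts V E" and v: "v \<in> V"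
  have "(\<exists>u\<in>V. E (f v) u \<and> \<not> (\<exists>w\<in>V. E (f v) w \<and> E u w)) \<longleftrightarrow>
        (\<exists>u\<in>V. E (f v) (f u) \<and> \<not> (\<exists>w\<in>V. E (f v) (f w) \<and> E (f u) (f w)))"
    by (subst (1 2) bij_betw_bex_iff[OF graph_auts_bij_betw[OF f], symmetric]) (rule refl)
  also have "\<dots> \<longleftrightarrow> (\<exists>u\<in>V. E v u \<and> \<not> (\<exists>w\<in>V. E v w \<and> E u w))"
    using v by (simp add: graph_auts_adj_iff[OF f] cong: bex_cong)
  finally show "f v \<in> triangle_free_edge_verts V E \<longleftrightarrow> v \<in> triangle_free_edge_verts V E"
    using v graph_auts_closed[OF f v] by (simp add: triangle_free_edge_verts_def)
qed (auto simp: triangle_free_edge_verts_def)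

section \<open>Automorphism groups, transport along injections, m-GRRs\<close>

lemma graph_auts_subgroup: "subgroup (graph_auts V E) (BijGroup V)"
proof (rule group.subgroupI[OF group_BijGroup])
  show "graph_auts V E \<subseteq> carrier (BijGroup V)"
    by (auto simp: graph_auts_def BijGroup_def)
  show "graph_auts V E \<noteq> {}"
    using id_Bij[of V] by (auto simp: graph_auts_def)
next
  fix f assume f: "f \<in> graph_auts V E"
  have fB: "f \<in> Bij V" using f by (simp add: graph_auts_def)
  have "E (inv_into V f u) (inv_into V f v) \<longleftrightarrow> E u v" if "u \<in> V" "v \<in> V" for u v
  proof -
    have "inv_into V f u \<in> V" "inv_into V f v \<in> V" "f (inv_into V f u) = u" "f (inv_into V f v) = v"
      using that graph_auts_bij_betw[OF f] by (meson bij_betwE bij_betw_inv_into bij_betw_inv_into_right)+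
    then show ?thesis using graph_auts_adj_iff[OF f] by metis
  qed
  then show "inv\<^bsub>BijGroup V\<^esub> f \<in> graph_auts V E"
    using restrict_inv_into_Bij[OF fB] by (simp add: inv_BijGroup[OF fB] graph_auts_def)
next
  fix f g assume f: "f \<in> graph_auts V E" and g: "g \<in> graph_auts V E"
  have fB: "f \<in> Bij V" and gB: "g \<in> Bij V" using f g by (auto simp: graph_auts_def)
  have "E (compose V f g u) (compose V f g v) \<longleftrightarrow> E u v" if "u \<in> V" "v \<in> V" for u v
    using that graph_auts_adj_iff[OF f] graph_auts_adj_iff[OF g] graph_auts_closed[OF g]
    by (simp add: compose_def)
  then show "f \<otimes>\<^bsub>BijGroup V\<^esub> g \<in> graph_auts V E"
    using compose_Bij[OF fB gB] fB gB by (simp add: BijGroup_def graph_auts_def)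
qed

lemma group_Aut_group: "group (Aut_group V E)"
  unfolding Aut_group_def by (rule subgroup.subgroup_is_group[OF graph_auts_subgroup group_BijGroup])

lemma carrier_Aut_group [simp]: "carrier (Aut_group V E) = graph_auts V E"
  by (simp add: Aut_group_def)

lemma mult_Aut_group:
  "f \<in> graph_auts V E \<Longrightarrow> g \<in> graph_auts V E \<Longrightarrow> f \<otimes>\<^bsub>Aut_group V E\<^esub> g = compose V f g"
  by (auto simp: Aut_group_def BijGroup_def graph_auts_def)

definition transport_adj :: "'v set \<Rightarrow> ('v \<Rightarrow> 'v \<Rightarrow> bool) \<Rightarrow> ('v \<Rightarrow> 'w) \<Rightarrow> 'w \<Rightarrow> 'w \<Rightarrow> bool" where
  "transport_adj V E \<psi> u w \<longleftrightarrow> (\<exists>p\<in>V. \<exists>q\<in>V. u = \<psi> p \<and> w = \<psi> q \<and> E p q)"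

definition conj_perm :: "'v set \<Rightarrow> ('v \<Rightarrow> 'w) \<Rightarrow> ('v \<Rightarrow> 'v) \<Rightarrow> 'w \<Rightarrow> 'w" where
  "conj_perm V \<psi> f = (\<lambda>w\<in>\<psi> ` V. \<psi> (f (inv_into V \<psi> w)))"

context
  fixes V :: "'v set" and \<psi> :: "'v \<Rightarrow> 'w"
  assumes inj: "inj_on \<psi> V"
begin

lemma transport_adj_image: "p \<in> V \<Longrightarrow> q \<in> V \<Longrightarrow> transport_adj V E \<psi> (\<psi> p) (\<psi> q) \<longleftrightarrow> E p q"
  using inj by (auto simp: transport_adj_def inj_on_def)

lemma simple_graph_transport:
  assumes "simple_graph V E"
  shows "simple_graph (\<psi> ` V) (transport_adj V E \<psi>)"
proof -
  have "\<not> transport_adj V E \<psi> u u" for u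
    using assms inj by (auto simp: simple_graph_def transport_adj_def inj_on_eq_iff)
  moreover have "transport_adj V E \<psi> w u" if "transport_adj V E \<psi> u w" for u w
  proof -
    from that obtain p q where "p \<in> V" "q \<in> V" "u = \<psi> p" "w = \<psi> q" "E p q"
      by (auto simp: transport_adj_def)
    then show ?thesis using assms by (simp add: transport_adj_image simple_graph_def)
  qed
  moreover have "u \<in> \<psi> ` V \<and> w \<in> \<psi> ` V" if "transport_adj V E \<psi> u w" for u w
    using that by (auto simp: transport_adj_def)
  moreover have "finite (\<psi> ` V)"
    using assms by (simp add: simple_graph_def)
  ultimately show ?thesis
    unfolding simple_graph_def by blast
qed

lemma regular_graph_transport:
  assumes "regular_graph V E"
  shows "regular_graph (\<psi> ` V) (transport_adj V E \<psi>)"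
proof -
  have "{u \<in> \<psi> ` V. transport_adj V E \<psi> (\<psi> p) u} = \<psi> ` {q \<in> V. E p q}" if "p \<in> V" for p
    using that transport_adj_image by auto
  then have "card {u \<in> \<psi> ` V. transport_adj V E \<psi> (\<psi> p) u} = card {q \<in> V. E p q}" if "p \<in> V" for p
    using that inj by (simp add: card_image inj_on_subset)
  then show ?thesis using assms by (auto simp: regular_graph_def)
qed

lemma conj_perm_image: "p \<in> V \<Longrightarrow> conj_perm V \<psi> f (\<psi> p) = \<psi> (f p)"
  using inj by (simp add: conj_perm_def)

lemma conj_perm_in_graph_auts:
  assumes f: "f \<in> graph_auts V E"
  shows "conj_perm V \<psi> f \<in> graph_auts (\<psi> ` V) (transport_adj V E \<psi>)"
proof -
  have "bij_betw (\<psi> \<circ> f \<circ> inv_into V \<psi>) (\<psi> ` V) (\<psi> ` V)"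
    using bij_betw_inv_into[OF inj_on_imp_bij_betw[OF inj]] graph_auts_bij_betw[OF f]
      inj_on_imp_bij_betw[OF inj]
    by (intro bij_betw_trans)
  then have "bij_betw (conj_perm V \<psi> f) (\<psi> ` V) (\<psi> ` V)"
    by (rule bij_betw_cong[THEN iffD1, rotated]) (simp add: conj_perm_def)
  moreover have "transport_adj V E \<psi> (conj_perm V \<psi> f (\<psi> p)) (conj_perm V \<psi> f (\<psi> q))
      \<longleftrightarrow> transport_adj V E \<psi> (\<psi> p) (\<psi> q)" if "p \<in> V" "q \<in> V" for p q
    using that graph_auts_closed[OF f] graph_auts_adj_iff[OF f]
    by (simp add: conj_perm_image transport_adj_image)
  ultimately show ?thesis
    by (auto simp: graph_auts_def Bij_def conj_perm_def)
qed

lemma pullback_in_graph_auts: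
  assumes f': "f' \<in> graph_auts (\<psi> ` V) (transport_adj V E \<psi>)"
  shows "(\<lambda>p\<in>V. inv_into V \<psi> (f' (\<psi> p))) \<in> graph_auts V E" (is "?f \<in> _")
proof -
  have "bij_betw (inv_into V \<psi> \<circ> f' \<circ> \<psi>) V V"
    using inj_on_imp_bij_betw[OF inj] graph_auts_bij_betw[OF f']
      bij_betw_inv_into[OF inj_on_imp_bij_betw[OF inj]]
    by (intro bij_betw_trans)
  then have "bij_betw ?f V V"
    by (rule bij_betw_cong[THEN iffD1, rotated]) simp
  moreover have "E (?f p) (?f q) \<longleftrightarrow> E p q" if "p \<in> V" "q \<in> V" for p q
  proof -
    have "f' (\<psi> p) \<in> \<psi> ` V" "f' (\<psi> q) \<in> \<psi> ` V"
      using graph_auts_closed[OF f'] that by blast+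
    then obtain p' q' where "p' \<in> V" "f' (\<psi> p) = \<psi> p'" "q' \<in> V" "f' (\<psi> q) = \<psi> q'"
      by blast
    then have "E (?f p) (?f q) \<longleftrightarrow> transport_adj V E \<psi> (f' (\<psi> p)) (f' (\<psi> q))"
      using that inj by (simp add: transport_adj_image)
    also have "\<dots> \<longleftrightarrow> E p q"
      using that graph_auts_adj_iff[OF f'] by (simp add: transport_adj_image)
    finally show ?thesis .
  qed
  ultimately show ?thesis
    by (auto simp: graph_auts_def Bij_def)
qed

lemma conj_perm_pullback:
  assumes f': "f' \<in> graph_auts (\<psi> ` V) (transport_adj V E \<psi>)"
  shows "conj_perm V \<psi> (\<lambda>p\<in>V. inv_into V \<psi> (f' (\<psi> p))) = f'"
proof
  fix w
  show "conj_perm V \<psi> (\<lambda>p\<in>V. inv_into V \<psi> (f' (\<psi> p))) w = f' w"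
  proof (cases "w \<in> \<psi> ` V")
    case True
    then obtain p where "p \<in> V" "w = \<psi> p" by blast
    moreover have "f' (\<psi> p) \<in> \<psi> ` V"
      using graph_auts_closed[OF f'] \<open>p \<in> V\<close> by blast
    ultimately show ?thesis
      by (simp add: conj_perm_image f_inv_into_f)
  next
    case False
    then have "f' w = undefined"
      by (rule extensional_arb[OF graph_auts_extensional[OF f']])
    then show ?thesis using False by (simp add: conj_perm_def)
  qed
qed

lemma graph_auts_transport:
  "graph_auts (\<psi> ` V) (transport_adj V E \<psi>) = conj_perm V \<psi> ` graph_auts V E"
proof (intro equalityI subsetI)
  fix f' assume "f' \<in> graph_auts (\<psi> ` V) (transport_adj V E \<psi>)"
  then show "f' \<in> conj_perm V \<psi> ` graph_auts V E"
    using pullback_in_graph_auts conj_perm_pullback by (metis image_eqI)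
next
  fix f' assume "f' \<in> conj_perm V \<psi> ` graph_auts V E"
  then show "f' \<in> graph_auts (\<psi> ` V) (transport_adj V E \<psi>)"
    using conj_perm_in_graph_auts by blast
qed

end

definition right_mult_perm :: "('a, 'b) monoid_scheme \<Rightarrow> nat \<Rightarrow> 'a \<Rightarrow> 'a \<times> nat \<Rightarrow> 'a \<times> nat" where
  "right_mult_perm G m g = (\<lambda>(y, i) \<in> carrier G \<times> {0..<m}. (y \<otimes>\<^bsub>G\<^esub> g, i))"

context group
begin

lemma right_mult_perm_apply:
  "y \<in> carrier G \<Longrightarrow> i < m \<Longrightarrow> right_mult_perm G m g (y, i) = (y \<otimes> g, i)"
  by (simp add: right_mult_perm_def)

lemma right_mult_perm_inj_on: "0 < m \<Longrightarrow> inj_on (right_mult_perm G m) (carrier G)"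
proof (rule inj_onI)
  fix g h assume "0 < m" "g \<in> carrier G" "h \<in> carrier G" "right_mult_perm G m g = right_mult_perm G m h"
  then have "right_mult_perm G m g (\<one>, 0) = right_mult_perm G m h (\<one>, 0)" by simp
  then show "g = h" using \<open>0 < m\<close> \<open>g \<in> carrier G\<close> \<open>h \<in> carrier G\<close> by (simp add: right_mult_perm_apply)
qed

lemma right_mult_perm_eq_id_if_fixes:
  assumes "g \<in> carrier G" "v \<in> carrier G \<times> {0..<m}" "right_mult_perm G m g v = v"
  shows "right_mult_perm G m g = (\<lambda>v\<in>carrier G \<times> {0..<m}. v)"
proof -
  obtain y i where "v = (y, i)" "y \<in> carrier G" "i < m" using assms(2) by auto
  then have "g = \<one>" using assms(1,3) by (simp add: right_mult_perm_apply)
  then show ?thesis by (auto simp: right_mult_perm_def)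
qed

lemma orbit_right_mult_perm:
  assumes "y \<in> carrier G" "i < m"
  shows "{right_mult_perm G m g (y, i) |g. g \<in> carrier G} = carrier G \<times> {i}"
proof (intro equalityI subsetI)
  fix v assume "v \<in> carrier G \<times> {i}"
  then obtain z where "z \<in> carrier G" "v = (z, i)" by auto
  then have "v = right_mult_perm G m (inv y \<otimes> z) (y, i)"
    using assms by (simp add: right_mult_perm_apply m_assoc[symmetric])
  then show "v \<in> {right_mult_perm G m g (y, i) |g. g \<in> carrier G}"
    using assms \<open>z \<in> carrier G\<close> by blast
qed (use assms in \<open>auto simp: right_mult_perm_apply\<close>)

end

lemma (in group) card_orbits_if_graph_auts_right_mult:
  assumes auts: "graph_auts (carrier G \<times> {0..<m}) E = right_mult_perm G m ` carrier G"
  shows "card (orbits (Aut_group (carrier G \<times> {0..<m}) E) (carrier G \<times> {0..<m}) (\<lambda>h v. h v)) = m"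
proof -
  let ?V = "carrier G \<times> {0..<m}" and ?A = "Aut_group (carrier G \<times> {0..<m}) E"
  have "orbit ?A (\<lambda>h v. h v) v = carrier G \<times> {snd v}" if "v \<in> ?V" for v
  proof -
    obtain y i where v: "v = (y, i)" "y \<in> carrier G" "i < m" using \<open>v \<in> ?V\<close> by auto
    have "orbit ?A (\<lambda>h v. h v) v = {right_mult_perm G m g v |g. g \<in> carrier G}"
      by (auto simp: orbit_def auts)
    also have "\<dots> = carrier G \<times> {snd v}"
      using orbit_right_mult_perm[OF v(2,3)] v(1) by simp
    finally show ?thesis .
  qed
  then have "orbits ?A ?V (\<lambda>h v. h v) = {carrier G \<times> {snd v} |v. v \<in> ?V}"
    unfolding orbits_def by blast
  also have "\<dots> = (\<lambda>i. carrier G \<times> {i}) ` {0..<m}"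
    by (auto simp: image_iff) (metis one_closed snd_conv)
  finally have "orbits ?A ?V (\<lambda>h v. h v) = (\<lambda>i. carrier G \<times> {i}) ` {0..<m}" .
  moreover have "inj_on (\<lambda>i. carrier G \<times> {i}) {0..<m}"
    by (auto simp: inj_on_def)
  ultimately show ?thesis by (simp add: card_image)
qed

lemma (in comm_group) right_mult_perm_mult:
  assumes "g \<in> carrier G" "h \<in> carrier G"
  shows "right_mult_perm G m (g \<otimes> h) = compose (carrier G \<times> {0..<m}) (right_mult_perm G m g) (right_mult_perm G m h)"
proof
  fix v
  show "right_mult_perm G m (g \<otimes> h) v = compose (carrier G \<times> {0..<m}) (right_mult_perm G m g) (right_mult_perm G m h) v"
    using assms by (cases v) (auto simp: right_mult_perm_def compose_def m_assoc m_comm[of g h])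
qed

lemma (in comm_group) is_mGRR_if_graph_auts_right_mult:
  assumes m: "0 < m"
    and simple: "simple_graph (carrier G \<times> {0..<m}) E"
    and regular: "regular_graph (carrier G \<times> {0..<m}) E"
    and auts: "graph_auts (carrier G \<times> {0..<m}) E = right_mult_perm G m ` carrier G"
  shows "is_mGRR m G (carrier G \<times> {0..<m}) E"
proof -
  let ?V = "carrier G \<times> {0..<m}" and ?A = "Aut_group (carrier G \<times> {0..<m}) E"
  have A_self: "?A\<lparr>carrier := graph_auts ?V E\<rparr> = ?A"
    by (simp add: Aut_group_def)
  have "right_mult_perm G m \<in> iso G ?A"
  proof (rule isoI)
    show "right_mult_perm G m \<in> hom G ?A"
      using auts by (intro homI) (auto simp: mult_Aut_group right_mult_perm_mult)
    show "bij_betw (right_mult_perm G m) (carrier G) (carrier ?A)"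
      using auts right_mult_perm_inj_on[OF m] by (simp add: bij_betw_def)
  qed
  then have "?A \<cong> G"
    using is_isoI iso_sym by blast
  moreover have "subgroup (graph_auts ?V E) ?A"
    using group.subgroup_self[OF group_Aut_group] by simp
  moreover have "semiregular_on ?V (graph_auts ?V E)"
    unfolding semiregular_on_def auts using right_mult_perm_eq_id_if_fixes by blast
  moreover have "card (orbits ?A ?V (\<lambda>h v. h v)) = m"
    using auts by (rule card_orbits_if_graph_auts_right_mult)
  ultimately show ?thesis
    using simple regular A_self unfolding is_mGRR_def by metis
qed

section \<open>The graph Delta\<close>

lemma Delta_rel_iff:
  "Delta_rel n m \<delta> (a, i) (b, j) \<longleftrightarrow> a < n \<and> b < n \<and> i < m \<and> j < m \<and>
     (i = 1 \<and> j = 1 \<and> a \<noteq> b \<or> i = 2 \<and> j = 2 \<and> a \<noteq> b \<or> 4 \<le> i \<and> i = j \<and> b = (a + 1) mod n \<or>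
      i = 0 \<and> j = 2 \<and> a \<noteq> b \<or> i = 2 \<and> j = 3 \<and> a = b \<or> i = 3 \<and> j = m - 1 \<and> a \<noteq> b \<or>
      i = 1 \<and> j = 4 \<and> a \<noteq> b \<or> 4 \<le> i \<and> i \<le> m - 2 \<and> j = i + 1 \<and> a \<noteq> b \<or> i = 0 \<and> j = 3 \<or>
      i = 0 \<and> j = 1 \<and> b = (a + 1) mod n \<or> i = 1 \<and> j = 2 \<and> b = (a + \<delta>) mod n)"
  by (simp add: Delta_rel_def)

lemma Delta_adj_right_transl:
  assumes "a < n" "b < n"
  shows "Delta_adj n m \<delta> ((a + g) mod n, i) ((b + g) mod n, j) \<longleftrightarrow> Delta_adj n m \<delta> (a, i) (b, j)"
proof -
  have "(a + g) mod n = (b + g) mod n \<longleftrightarrow> a = b" "(b + g) mod n = (a + g) mod n \<longleftrightarrow> b = a"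
    using mod_add_right_cancel_less assms by auto
  moreover have "(b + g) mod n = ((a + g) mod n + k) mod n \<longleftrightarrow> b = (a + k) mod n"
    "(a + g) mod n = ((b + g) mod n + k) mod n \<longleftrightarrow> a = (b + k) mod n" for k
    using mod_add_shift_eq_iff assms by auto
  moreover have "(a + g) mod n < n" "(b + g) mod n < n"
    using assms by simp_all
  ultimately show ?thesis
    using assms unfolding Delta_adj_def Delta_rel_iff by (simp only: simp_thms)
qed

lemma right_transl_in_graph_auts:
  assumes "g < n"
  shows "right_transl n m g \<in> graph_auts (Delta_verts n m) (Delta_adj n m \<delta>)"
proof -
  let ?V = "Delta_verts n m" and ?f = "right_transl n m g"
  have f_apply: "?f (a, i) = ((a + g) mod n, i)" if "(a, i) \<in> ?V" for a i
    using that by (simp add: right_transl_def)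
  have "inj_on ?f ?V"
  proof (rule inj_onI)
    fix u v assume "u \<in> ?V" "v \<in> ?V" "?f u = ?f v"
    then show "u = v"
      using mod_add_right_cancel_less f_apply by (auto simp: Delta_verts_def)
  qed
  moreover have "?f ` ?V \<subseteq> ?V"
    using assms by (auto simp: right_transl_def Delta_verts_def)
  ultimately have "bij_betw ?f ?V ?V"
    by (simp add: bij_betw_def endo_inj_surj Delta_verts_def)
  moreover have "Delta_adj n m \<delta> (?f u) (?f v) \<longleftrightarrow> Delta_adj n m \<delta> u v" if "u \<in> ?V" "v \<in> ?V" for u v
    using that f_apply Delta_adj_right_transl by (auto simp: Delta_verts_def)
  ultimately show ?thesis
    by (simp add: graph_auts_def Bij_def right_transl_def)
qed

lemma card_rows_Un:
  fixes a n j k :: nat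
  assumes "a < n" "j \<noteq> k"
  shows "card (({0..<n} - {a}) \<times> {j} \<union> ({0..<n} - {a}) \<times> {k}) = n - 1 + (n - 1)"
    and "card ({0..<n} \<times> {j} \<union> ({0..<n} - {a}) \<times> {k}) = n + (n - 1)"
  using assms by (subst card_Un_disjoint; auto simp: card_cartesian_product)+

locale Delta_graph =
  fixes n m \<delta> :: nat
  assumes three_le_n: "3 \<le> n" and five_le_m: "5 \<le> m" and delta_less: "\<delta> < n"
begin

abbreviation V :: "(nat \<times> nat) set" where "V \<equiv> Delta_verts n m"
abbreviation E :: "nat \<times> nat \<Rightarrow> nat \<times> nat \<Rightarrow> bool" where "E \<equiv> Delta_adj n m \<delta>"

lemma mem_V [simp]: "(a, i) \<in> V \<longleftrightarrow> a < n \<and> i < m"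
  by (simp add: Delta_verts_def)

lemma adj_layer0:
  "E (a, 0) (b, j) \<longleftrightarrow> a < n \<and> b < n \<and> (j = 1 \<and> b = (a + 1) mod n \<or> j = 2 \<and> a \<noteq> b \<or> j = 3)"
  using five_le_m by (auto simp: Delta_adj_def Delta_rel_iff)

lemma adj_layer1:
  "E (a, 1) (b, j) \<longleftrightarrow> a < n \<and> b < n \<and>
     (j = 0 \<and> a = (b + 1) mod n \<or> j = 1 \<and> a \<noteq> b \<or> j = 2 \<and> b = (a + \<delta>) mod n \<or> j = 4 \<and> a \<noteq> b)"
  using five_le_m by (auto simp: Delta_adj_def Delta_rel_iff)

lemma adj_layer2:
  "E (a, 2) (b, j) \<longleftrightarrow> a < n \<and> b < n \<and>
     (j = 0 \<and> a \<noteq> b \<or> j = 1 \<and> a = (b + \<delta>) mod n \<or> j = 2 \<and> a \<noteq> b \<or> j = 3 \<and> a = b)"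
  using five_le_m by (auto simp: Delta_adj_def Delta_rel_iff)

lemma adj_layer3:
  "E (a, 3) (b, j) \<longleftrightarrow> a < n \<and> b < n \<and> (j = 0 \<or> j = 2 \<and> a = b \<or> j = m - 1 \<and> a \<noteq> b)"
  using five_le_m by (auto simp: Delta_adj_def Delta_rel_iff)

lemma adj_upper_layer:
  assumes "4 \<le> i" "i < m"
  shows "E (a, i) (b, j) \<longleftrightarrow> a < n \<and> b < n \<and> j < m \<and>
     (j = i \<and> (b = (a + 1) mod n \<or> a = (b + 1) mod n) \<or> j = i + 1 \<and> a \<noteq> b \<or>
      i = j + 1 \<and> 4 \<le> j \<and> a \<noteq> b \<or> i = 4 \<and> j = 1 \<and> a \<noteq> b \<or> i = m - 1 \<and> j = 3 \<and> a \<noteq> b)"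
proof -
  have i: "i \<noteq> 0" "i \<noteq> 1" "i \<noteq> 2" "i \<noteq> 3" using assms by auto
  consider "j = i" | "j = i + 1" | "i = j + 1" | "j \<noteq> i" "j \<noteq> i + 1" "i \<noteq> j + 1"
    by blast
  then show ?thesis
    using assms i by cases (auto simp: Delta_adj_def Delta_rel_iff)
qed

(* The unfolded copy of adj_layer1 matches Suc 0, to which the simplifier normalises 1. *)
lemmas adj_layer = adj_layer0 adj_layer1 adj_layer1[unfolded One_nat_def] adj_layer2 adj_layer3

lemma mod_n_less [simp]: "x mod n < n"
  using three_le_n by simp

lemma adj_sym: "E u v \<longleftrightarrow> E v u"
  by (auto simp: Delta_adj_def)

lemma adj_in_V: "E u v \<Longrightarrow> u \<in> V \<and> v \<in> V"
  by (cases u; cases v) (auto simp: Delta_adj_def Delta_rel_iff)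

lemma ex_third_residue: "\<exists>c<n. c \<noteq> a \<and> c \<noteq> b"
proof -
  have "\<exists>c\<in>{0, 1, 2}. c \<noteq> a \<and> c \<noteq> b" by auto
  then show ?thesis using three_le_n by force
qed

lemma succ_eq_iff_pred: "a < n \<Longrightarrow> b < n \<Longrightarrow> a = (b + 1) mod n \<longleftrightarrow> b = (a + (n - 1)) mod n"
  using mod_add_eq_iff_sub[of a n b "n - 1"] three_le_n by simp

lemma succ_neq_pred: "a < n \<Longrightarrow> (a + 1) mod n \<noteq> (a + (n - 1)) mod n"
  using mod_add_right_cancel_less[of 1 n "n - 1" a] three_le_n by (simp add: add.commute)

lemma succ_neq_self: "a < n \<Longrightarrow> (a + 1) mod n \<noteq> a"
  using mod_add_neq_self[of 1 n a] three_le_n by simp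

lemma pred_neq_self: "a < n \<Longrightarrow> (a + (n - 1)) mod n \<noteq> a"
  using mod_add_neq_self[of "n - 1" n a] three_le_n by simp

definition layer :: "nat \<Rightarrow> (nat \<times> nat) set" where
  "layer i = {0..<n} \<times> {i}"

lemma mem_layer [simp]: "(a, j) \<in> layer i \<longleftrightarrow> a < n \<and> j = i"
  by (auto simp: layer_def)

lemma simple_graph_Delta: "simple_graph V E"
proof -
  have irrefl: "\<not> E v v" for v
    using succ_neq_self[of "fst v"] by (cases v) (auto simp: Delta_adj_def Delta_rel_iff dest: sym)
  have "finite V"
    by (simp add: Delta_verts_def)
  then show ?thesis
    unfolding simple_graph_def using adj_sym adj_in_V irrefl by blast
qed

lemma degree_upper_layer:
  assumes "a < n" "4 \<le> i" "i < m"
  shows "card {u \<in> V. E (a, i) u} = 2 * n"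
proof -
  let ?R = "\<lambda>j::nat. ({0..<n} - {a}) \<times> {j}"
  (* lo and up are the two layers joined to layer i by the relation g ~ g' iff g <> g'. *)
  have "\<exists>lo up. lo \<noteq> up \<and> lo \<noteq> i \<and> up \<noteq> i \<and> lo < m \<and> up < m \<and> (\<forall>j.
      (j = i + 1 \<and> j < m \<or> i = j + 1 \<and> 4 \<le> j \<or> i = 4 \<and> j = 1 \<or> i = m - 1 \<and> j = 3) \<longleftrightarrow> j = lo \<or> j = up)"
    by (rule exI[of _ "if i = 4 then 1 else i - 1"], rule exI[of _ "if i = m - 1 then 3 else i + 1"])
      (use assms in auto)
  then obtain lo up where layers: "lo \<noteq> up" "lo \<noteq> i" "up \<noteq> i" "lo < m" "up < m"
    and nbr_layer: "\<And>j. (j = i + 1 \<and> j < m \<or> i = j + 1 \<and> 4 \<le> j \<or> i = 4 \<and> j = 1 \<or> i = m - 1 \<and> j = 3)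
      \<longleftrightarrow> j = lo \<or> j = up"
    by blast
  have "E (a, i) (b, j) \<longleftrightarrow> b < n \<and> j < m \<and>
      (j = i \<and> (b = (a + 1) mod n \<or> b = (a + (n - 1)) mod n) \<or> (j = lo \<or> j = up) \<and> b \<noteq> a)" for b j
    using assms succ_eq_iff_pred[of a b] nbr_layer[of j] unfolding adj_upper_layer[OF assms(2,3)]
    by blast
  then have adj: "E (a, i) (b, j) \<longleftrightarrow>
      (b, j) \<in> insert ((a + 1) mod n, i) (insert ((a + (n - 1)) mod n, i) (?R lo \<union> ?R up))" for b j
    using layers assms succ_neq_self[of a] pred_neq_self[of a] by auto
  have "{u \<in> V. E (a, i) u} =
      insert ((a + 1) mod n, i) (insert ((a + (n - 1)) mod n, i) (?R lo \<union> ?R up))"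
    using adj adj_in_V layers assms by auto
  then show ?thesis
    using card_rows_Un(1)[OF assms(1) \<open>lo \<noteq> up\<close>] layers three_le_n succ_neq_pred[of a] assms by simp
qed

lemma degree_Delta:
  assumes "a < n" "i < m"
  shows "card {u \<in> V. E (a, i) u} = 2 * n"
proof -
  let ?R = "\<lambda>j::nat. ({0..<n} - {a}) \<times> {j}"
  have n: "n - 1 + 1 = n" using three_le_n by simp
  consider "i = 0" | "i = 1" | "i = 2" | "i = 3" | "4 \<le> i" by arith
  then show ?thesis
  proof cases
    case 1
    have "{u \<in> V. E (a, i) u} = insert ((a + 1) mod n, 1) ({0..<n} \<times> {3} \<union> ?R 2)"
      using 1 assms five_le_m by (auto simp: adj_layer)
    then show ?thesis using card_rows_Un(2)[OF assms(1), of 3 2] n by simp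
  next
    case 2
    have "{u \<in> V. E (a, i) u} =
        insert ((a + (n - 1)) mod n, 0) (insert ((a + \<delta>) mod n, 2) (?R 1 \<union> ?R 4))"
      using 2 assms five_le_m succ_eq_iff_pred[of a] by (auto simp: adj_layer)
    then show ?thesis using card_rows_Un(1)[OF assms(1), of 1 4] n by simp
  next
    case 3
    have "{u \<in> V. E (a, i) u} = insert ((a + (n - \<delta>)) mod n, 1) (insert (a, 3) (?R 0 \<union> ?R 2))"
      using 3 assms five_le_m delta_less mod_add_eq_iff_sub[of _ n a \<delta>] by (auto simp: adj_layer)
    then show ?thesis using card_rows_Un(1)[OF assms(1), of 0 2] n by simp
  next
    case 4
    have "{u \<in> V. E (a, i) u} = insert (a, 2) ({0..<n} \<times> {0} \<union> ?R (m - 1))"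
      using 4 assms five_le_m by (auto simp: adj_layer)
    moreover have "(0::nat) \<noteq> m - 1" using five_le_m by simp
    ultimately show ?thesis using card_rows_Un(2)[OF assms(1), of 0 "m - 1"] n by simp
  qed (rule degree_upper_layer[OF assms(1) _ assms(2)])
qed

lemma regular_graph_Delta: "regular_graph V E"
  unfolding regular_graph_def using degree_Delta by (auto simp: Delta_verts_def)

end

locale Delta_rigid = Delta_graph +
  assumes delta_succ_less: "\<delta> + 1 < n"
begin

lemma shift_delta_neq_pred: "a < n \<Longrightarrow> (a + \<delta>) mod n \<noteq> (a + (n - 1)) mod n"
  using mod_add_right_cancel_less[of \<delta> n "n - 1" a] delta_succ_less by (simp add: add.commute)

lemma succ_shift_delta_neq_self: "b < n \<Longrightarrow> ((b + 1) mod n + \<delta>) mod n \<noteq> b"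
  using mod_add_neq_self[of "\<delta> + 1" n b] delta_succ_less by (simp add: mod_add_left_eq add.assoc)

lemma edge_at_layer1_in_triangle:
  assumes e: "E (a, 1) (b, j)"
  shows "\<exists>w. E (a, 1) w \<and> E (b, j) w"
proof -
  have ab: "a < n" "b < n" using adj_in_V[OF e] by auto
  obtain c where c: "c < n" "c \<noteq> a" "c \<noteq> b" using ex_third_residue by blast
  consider "j = 0" "a = (b + 1) mod n" | "j = 1 \<or> j = 4" | "j = 2" "b = (a + \<delta>) mod n"
    using e by (auto simp: adj_layer)
  then show ?thesis
  proof cases
    case 1
    then show ?thesis using ab succ_shift_delta_neq_self[of b]
      by (intro exI[of _ "((a + \<delta>) mod n, 2)"]) (auto simp: adj_layer)
  next
    case 2
    then show ?thesis using e c
      by (intro exI[of _ "(c, 5 - j)"]) (auto simp: adj_layer adj_sym[of "(b, 4)"])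
  next
    case 3
    then show ?thesis using ab shift_delta_neq_pred[of a] succ_eq_iff_pred[of a]
      by (intro exI[of _ "((a + (n - 1)) mod n, 0)"]) (auto simp: adj_layer)
  qed
qed

lemma edge_at_layer2_in_triangle:
  assumes e: "E (a, 2) (b, j)"
  shows "\<exists>w. E (a, 2) w \<and> E (b, j) w"
proof -
  have ab: "a < n" "b < n" using adj_in_V[OF e] by auto
  obtain c where c: "c < n" "c \<noteq> a" "c \<noteq> b" using ex_third_residue by blast
  consider "j = 0 \<or> j = 2 \<or> j = 3" | "j = 1" "a = (b + \<delta>) mod n"
    using e by (auto simp: adj_layer)
  then show ?thesis
  proof cases
    case 1
    then show ?thesis using e c
      by (intro exI[of _ "(c, if j = 0 then 2 else 0)"]) (auto simp: adj_layer)
  next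
    case 2
    then show ?thesis using ab shift_delta_neq_pred[of b] succ_eq_iff_pred[of b]
      by (intro exI[of _ "((b + (n - 1)) mod n, 0)"]) (auto simp: adj_layer)
  qed
qed

lemma edge_at_upper_layer_in_triangle:
  assumes e: "E (a, i) (b, j)" and "4 \<le> i"
  shows "\<exists>w. E (a, i) w \<and> E (b, j) w"
proof (cases "j = i")
  case True
  obtain c where "c < n" "c \<noteq> a" "c \<noteq> b" using ex_third_residue by blast
  then show ?thesis using True assms adj_in_V[OF e]
    by (intro exI[of _ "(c, if i = 4 then 1 else i - 1)"]) (auto simp: adj_upper_layer)
next
  case False
  have ab: "a < n" "b < n" "i < m" using adj_in_V[OF e] by auto
  obtain c where "c = (a + 1) mod n \<or> c = (a + (n - 1)) mod n" "c \<noteq> b"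
    using succ_neq_pred[of a] ab by metis
  then show ?thesis using assms ab False succ_eq_iff_pred[of a]
    by (intro exI[of _ "(c, i)"]) (auto simp: adj_upper_layer adj_sym[of "(b, j)"] adj_layer3)
qed

lemma edge_in_triangle:
  assumes e: "E (a, i) (b, j)" and "i \<noteq> 0" "i \<noteq> 3"
  shows "\<exists>w. E (a, i) w \<and> E (b, j) w"
proof -
  consider "i = 1" | "i = 2" | "4 \<le> i" using assms by arith
  then show ?thesis
  proof cases
    case 1
    then show ?thesis using edge_at_layer1_in_triangle e by simp
  next
    case 2
    then show ?thesis using edge_at_layer2_in_triangle e by simp
  qed (rule edge_at_upper_layer_in_triangle[OF e])
qed

lemma triangle_free_edge_verts_Delta: "triangle_free_edge_verts V E = layer 0 \<union> layer 3"
proof (intro equalityI subsetI)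
  fix v assume v: "v \<in> triangle_free_edge_verts V E"
  obtain a i where [simp]: "v = (a, i)" by (cases v)
  from v obtain b j where e: "E (a, i) (b, j)" and no_common: "\<not> (\<exists>w\<in>V. E (a, i) w \<and> E (b, j) w)"
    by (auto simp: triangle_free_edge_verts_def)
  have "i = 0 \<or> i = 3"
    using edge_in_triangle[OF e] no_common adj_in_V by blast
  then show "v \<in> layer 0 \<union> layer 3" using v by (auto simp: triangle_free_edge_verts_def)
next
  fix v assume v: "v \<in> layer 0 \<union> layer 3"
  then obtain a i where [simp]: "v = (a, i)" and a: "a < n" and i: "i = 0 \<or> i = 3"
    by (auto simp: layer_def)
  have "E (a, i) (a, 3 - i)" using a i by (auto simp: adj_layer)
  moreover have "\<not> E (a, i) w \<or> \<not> E (a, 3 - i) w" for w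
    using i five_le_m by (cases w) (auto simp: adj_layer)
  ultimately show "v \<in> triangle_free_edge_verts V E"
    using a i five_le_m by (auto simp: triangle_free_edge_verts_def)
qed

lemma uniquely_adj_triangle_free_iff:
  assumes "a < n" "i < m" "i \<noteq> 0" "i \<noteq> 3"
  shows "(\<exists>!u\<in>layer 0 \<union> layer 3. E (a, i) u) \<longleftrightarrow> i = 1"
proof
  assume unique: "\<exists>!u\<in>layer 0 \<union> layer 3. E (a, i) u"
  have two: "u = u'" if "u \<in> layer 0 \<union> layer 3" "E (a, i) u" "u' \<in> layer 0 \<union> layer 3" "E (a, i) u'"
    for u u' using unique that by blast
  show "i = 1"
  proof (rule ccontr)
    assume "i \<noteq> 1"
    then consider "i = 2" | "4 \<le> i" "i = m - 1" | "4 \<le> i" "i \<noteq> m - 1" using assms by arith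
    then show False
    proof cases
      case 1
      then show False
        using two[of "(a, 3)" "((a + 1) mod n, 0)"] assms succ_neq_self[of a] by (simp add: adj_layer)
    next
      case 2
      have "E (a, i) ((a + 1) mod n, 3)" "E (a, i) ((a + (n - 1)) mod n, 3)"
        using 2 assms succ_neq_self[of a] pred_neq_self[of a] by (simp_all add: adj_upper_layer)
      then have "((a + 1) mod n, 3) = ((a + (n - 1)) mod n, 3::nat)"
        by (intro two) auto
      then show False using succ_neq_pred[of a] assms(1) by simp
    next
      case 3
      from unique obtain b j where "(b, j) \<in> layer 0 \<union> layer 3" "E (a, i) (b, j)"
        by (metis surj_pair)
      then show False using 3 assms by (auto simp: adj_upper_layer)
    qed
  qed
next
  assume "i = 1"
  then have "E (a, i) u \<longleftrightarrow> u = ((a + (n - 1)) mod n, 0)" if "u \<in> layer 0 \<union> layer 3" for u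
    using that assms succ_eq_iff_pred[of a] by (cases u) (auto simp: adj_layer)
  moreover have "((a + (n - 1)) mod n, 0) \<in> layer 0 \<union> layer 3"
    using three_le_n by simp
  ultimately show "\<exists>!u\<in>layer 0 \<union> layer 3. E (a, i) u"
    by blast
qed

lemma layer1_eq: "layer 1 = uniquely_adj_set V E (layer 0 \<union> layer 3) - (layer 0 \<union> layer 3)"
proof (intro equalityI subsetI)
  fix v assume "v \<in> layer 1"
  then obtain a where [simp]: "v = (a, 1)" and "a < n" by (auto simp: layer_def)
  then show "v \<in> uniquely_adj_set V E (layer 0 \<union> layer 3) - (layer 0 \<union> layer 3)"
    using uniquely_adj_triangle_free_iff[of a 1] five_le_m by (simp add: uniquely_adj_set_def)
next
  fix v assume v: "v \<in> uniquely_adj_set V E (layer 0 \<union> layer 3) - (layer 0 \<union> layer 3)"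
  obtain a i where [simp]: "v = (a, i)" by (cases v)
  show "v \<in> layer 1"
    using v uniquely_adj_triangle_free_iff[of a i] by (simp add: uniquely_adj_set_def)
qed

lemma layer0_eq: "layer 0 = (layer 0 \<union> layer 3) \<inter> adj_set V E (layer 1)"
proof (intro equalityI subsetI)
  fix v assume "v \<in> layer 0"
  then obtain a where [simp]: "v = (a, 0)" and "a < n" by (auto simp: layer_def)
  then have "E v ((a + 1) mod n, 1)" by (simp add: adj_layer)
  then show "v \<in> (layer 0 \<union> layer 3) \<inter> adj_set V E (layer 1)"
    using \<open>a < n\<close> five_le_m by (auto simp: adj_set_def)
next
  fix v assume "v \<in> (layer 0 \<union> layer 3) \<inter> adj_set V E (layer 1)"
  then show "v \<in> layer 0" by (auto simp: adj_set_def adj_layer layer_def)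
qed

lemma layer2_eq: "layer 2 = adj_set V E (layer 0) - (layer 0 \<union> layer 1 \<union> layer 3)"
proof (intro equalityI subsetI)
  fix v assume "v \<in> layer 2"
  then obtain a where [simp]: "v = (a, 2)" and "a < n" by (auto simp: layer_def)
  then have "E v ((a + 1) mod n, 0)" using succ_neq_self[of a] by (simp add: adj_layer)
  then show "v \<in> adj_set V E (layer 0) - (layer 0 \<union> layer 1 \<union> layer 3)"
    using \<open>a < n\<close> five_le_m by (auto simp: adj_set_def)
next
  fix v assume v: "v \<in> adj_set V E (layer 0) - (layer 0 \<union> layer 1 \<union> layer 3)"
  obtain a i where [simp]: "v = (a, i)" by (cases v)
  from v obtain b where "E (a, i) (b, 0)" "i \<noteq> 0" "i \<noteq> 1" "i \<noteq> 3" "a < n" "i < m"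
    by (auto simp: adj_set_def layer_def)
  then show "v \<in> layer 2"
    by (cases "4 \<le> i") (auto simp: adj_upper_layer adj_sym[of "(a, i)"] adj_layer)
qed

lemma upper_layer_eq:
  assumes "4 \<le> k" "k < m"
  shows "layer k = adj_set V E (layer (if k = 4 then 1 else k - 1)) - (\<Union>j<k. layer j)"
proof (intro equalityI subsetI)
  fix v assume "v \<in> layer k"
  then obtain a where [simp]: "v = (a, k)" and "a < n" by (auto simp: layer_def)
  then have "E v ((a + 1) mod n, if k = 4 then 1 else k - 1)"
    using assms succ_neq_self[of a] by (auto simp: adj_upper_layer)
  then show "v \<in> adj_set V E (layer (if k = 4 then 1 else k - 1)) - (\<Union>j<k. layer j)"
    using \<open>a < n\<close> assms by (auto simp: adj_set_def)
next
  fix v assume v: "v \<in> adj_set V E (layer (if k = 4 then 1 else k - 1)) - (\<Union>j<k. layer j)"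
  obtain a i where [simp]: "v = (a, i)" by (cases v)
  from v obtain b where "E (a, i) (b, if k = 4 then 1 else k - 1)" "k \<le> i" "i < m"
    by (auto simp: adj_set_def layer_def not_less)
  then show "v \<in> layer k"
    using assms adj_in_V by (auto simp: adj_upper_layer split: if_splits)
qed

lemma low_layer_aut_invariant: "i \<le> 3 \<Longrightarrow> aut_invariant V E (layer i)"
proof -
  have T: "aut_invariant V E (layer 0 \<union> layer 3)"
    using aut_invariant_triangle_free_edge_verts triangle_free_edge_verts_Delta by metis
  have L1: "aut_invariant V E (layer 1)"
    unfolding layer1_eq by (intro aut_invariant_Diff aut_invariant_uniquely_adj_set T)
  have L0: "aut_invariant V E (layer 0)"
    by (subst layer0_eq) (intro aut_invariant_Int aut_invariant_adj_set T L1)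
  have L3: "aut_invariant V E (layer 3)"
  proof -
    have "layer 3 = (layer 0 \<union> layer 3) - layer 0" by (auto simp: layer_def)
    then show ?thesis using aut_invariant_Diff[OF T L0] by simp
  qed
  have L2: "aut_invariant V E (layer 2)"
    unfolding layer2_eq by (intro aut_invariant_Diff aut_invariant_adj_set aut_invariant_Un L0 L1 L3)
  assume "i \<le> 3"
  then have "i = 0 \<or> i = 1 \<or> i = 2 \<or> i = 3" by arith
  then show "aut_invariant V E (layer i)" using L0 L1 L2 L3 by blast
qed

lemma layer_aut_invariant: "i < m \<Longrightarrow> aut_invariant V E (layer i)"
proof (induction i rule: less_induct)
  case (less k)
  show ?case
  proof (cases "k \<le> 3")
    case True
    then show ?thesis by (rule low_layer_aut_invariant)
  next
    case False
    then have "4 \<le> k" by simp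
    have "aut_invariant V E (layer j)" if "j < k" for j
      using less that by simp
    then show ?thesis
      using \<open>4 \<le> k\<close> unfolding upper_layer_eq[OF \<open>4 \<le> k\<close> less.prems]
      by (intro aut_invariant_Diff aut_invariant_adj_set aut_invariant_UN) auto
  qed
qed

lemma aut_preserves_layer:
  assumes f: "f \<in> graph_auts V E" and "a < n" "i < m"
  obtains b where "b < n" "f (a, i) = (b, i)"
proof -
  have "f (a, i) \<in> layer i"
    using aut_invariantD[OF layer_aut_invariant f] assms by simp
  then show ?thesis using that by (auto simp: layer_def)
qed

lemma aut_fst_eq_if_adj_iff_neq:
  assumes f: "f \<in> graph_auts V E" and "a < n" "i < m" "j < m"
    and neq: "\<And>b c. b < n \<Longrightarrow> c < n \<Longrightarrow> E (b, i) (c, j) \<longleftrightarrow> b \<noteq> c"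
  shows "fst (f (a, i)) = fst (f (a, j))"
proof -
  obtain b c where "b < n" "f (a, i) = (b, i)" "c < n" "f (a, j) = (c, j)"
    using aut_preserves_layer[OF f] assms by metis
  moreover have "\<not> E (f (a, i)) (f (a, j))"
    using assms graph_auts_adj_iff[OF f, of "(a, i)" "(a, j)"] by simp
  ultimately show ?thesis using neq by simp
qed

lemma aut_fst_layer_independent:
  assumes f: "f \<in> graph_auts V E" and a: "a < n" and i: "i < m"
  shows "fst (f (a, i)) = fst (f (a, 0))"
proof -
  let ?s = "\<lambda>k. fst (f (a, k))"
  have m: "4 \<le> m - 1" "m - 1 < m" using five_le_m by auto
  have s02: "?s 0 = ?s 2"
    by (rule aut_fst_eq_if_adj_iff_neq[OF f a]) (use five_le_m in \<open>auto simp: adj_layer\<close>)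
  have s23: "?s 2 = ?s 3"
  proof -
    have "2 < m" "3 < m" using five_le_m by auto
    obtain b c where "f (a, 2) = (b, 2)" "f (a, 3) = (c, 3)"
      using aut_preserves_layer[OF f a \<open>2 < m\<close>] aut_preserves_layer[OF f a \<open>3 < m\<close>] by metis
    moreover have "E (f (a, 2)) (f (a, 3))"
      using a five_le_m graph_auts_adj_iff[OF f, of "(a, 2)" "(a, 3)"] by (simp add: adj_layer)
    ultimately show ?thesis by (simp add: adj_layer)
  qed
  have s3: "?s 3 = ?s (m - 1)"
    by (rule aut_fst_eq_if_adj_iff_neq[OF f a]) (use five_le_m in \<open>auto simp: adj_layer\<close>)
  have s14: "?s 1 = ?s 4"
    by (rule aut_fst_eq_if_adj_iff_neq[OF f a]) (use five_le_m in \<open>auto simp: adj_layer\<close>)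
  have s_upper: "?s k = ?s 4" if "4 \<le> k" "k < m" for k
    using that
  proof (induction k rule: dec_induct)
    case (step k)
    have "?s k = ?s (Suc k)"
      by (rule aut_fst_eq_if_adj_iff_neq[OF f a]) (use step in \<open>auto simp: adj_upper_layer\<close>)
    then show ?case using step by simp
  qed simp
  have s40: "?s 4 = ?s 0"
    using s02 s23 s3 s_upper[OF m] by simp
  consider "i = 0" | "i = 1" | "i = 2" | "i = 3" | "4 \<le> i" by arith
  then show ?thesis
  proof cases
    case 5
    then show ?thesis using s_upper[OF 5 i] s40 by simp
  qed (use s02 s23 s14 s40 in simp_all)
qed

lemma aut_layer0_shift:
  assumes f: "f \<in> graph_auts V E" and "a < n"
  shows "fst (f (a, 0)) = (fst (f (0, 0)) + a) mod n"
  using \<open>a < n\<close>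
proof (induction a)
  case 0
  have "0 < n" "0 < m" using three_le_n five_le_m by auto
  then obtain b where "b < n" "f (0, 0) = (b, 0)"
    using aut_preserves_layer[OF f] by metis
  then show ?case by simp
next
  case (Suc a)
  have "a < n" "0 < m" "1 < m" using Suc.prems five_le_m by auto
  then obtain b c where "f (a, 0) = (b, 0)" "f (Suc a, 1) = (c, 1)"
    using aut_preserves_layer[OF f \<open>a < n\<close> \<open>0 < m\<close>] aut_preserves_layer[OF f Suc.prems \<open>1 < m\<close>]
    by metis
  moreover have "E (f (a, 0)) (f (Suc a, 1))"
    using Suc.prems five_le_m graph_auts_adj_iff[OF f, of "(a, 0)" "(Suc a, 1)"] by (simp add: adj_layer)
  ultimately have "fst (f (Suc a, 1)) = (fst (f (a, 0)) + 1) mod n"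
    by (simp add: adj_layer)
  also have "\<dots> = (fst (f (0, 0)) + Suc a) mod n"
    using Suc by (simp add: mod_Suc_eq)
  finally show ?case
    using aut_fst_layer_independent[OF f Suc.prems, of 1] five_le_m by simp
qed

lemma aut_eq_right_transl:
  assumes f: "f \<in> graph_auts V E"
  shows "\<exists>g<n. f = right_transl n m g"
proof -
  let ?g = "fst (f (0, 0))"
  have "f = right_transl n m ?g"
  proof
    fix v
    show "f v = right_transl n m ?g v"
    proof (cases "v \<in> V")
      case True
      then obtain a i where ai: "v = (a, i)" "a < n" "i < m" by (auto simp: Delta_verts_def)
      then obtain b where "f (a, i) = (b, i)"
        using aut_preserves_layer[OF f ai(2,3)] by metis
      moreover have "b = (a + ?g) mod n"
        using calculation aut_fst_layer_independent[OF f ai(2,3)] aut_layer0_shift[OF f ai(2)]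
        by (simp add: add.commute)
      ultimately show ?thesis using ai by (simp add: right_transl_def Delta_verts_def)
    next
      case False
      then have "f v = undefined"
        using graph_auts_extensional[OF f] by (rule extensional_arb[rotated])
      then show ?thesis using False by (simp add: right_transl_def)
    qed
  qed
  moreover have "0 < n" "0 < m" using three_le_n five_le_m by auto
  then obtain b where "b < n" "f (0, 0) = (b, 0)"
    using aut_preserves_layer[OF f] by metis
  ultimately show ?thesis by auto
qed

theorem graph_auts_Delta: "graph_auts V E = right_transl n m ` {0..<n}"
  using aut_eq_right_transl right_transl_in_graph_auts by fastforce

end

section \<open>Cyclic groups\<close>

lemma (in group) cyclic_group_pow_bij:
  assumes "cyclic_group G" "finite (carrier G)"
  obtains x where "x \<in> carrier G"
    and "bij_betw (\<lambda>k. x [^] k) {0..<card (carrier G)} (carrier G)"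
    and "\<And>k. x [^] (k mod card (carrier G)) = x [^] k"
proof -
  let ?N = "card (carrier G)"
  obtain x where x: "x \<in> carrier G" "subgroup_generated G {x} = G"
    using assms(1) unfolding cyclic_group_def by blast
  have gen: "generate G {x} = carrier G"
    using arg_cong[OF x(2), of carrier] x(1) by (simp add: carrier_subgroup_generated)
  have ord: "ord x = ?N"
    using generate_pow_card[OF x(1)] gen by simp
  have N: "0 < ?N"
    using assms(2) by (auto simp: card_gt_0_iff)
  have pow_mod: "x [^] (k mod ?N) = x [^] k" for k
  proof -
    have "x [^] k = x [^] (?N * (k div ?N) + k mod ?N)" by simp
    also have "\<dots> = (x [^] ?N) [^] (k div ?N) \<otimes> x [^] (k mod ?N)"
      using x(1) by (simp add: nat_pow_mult nat_pow_pow)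
    also have "x [^] ?N = \<one>"
      using x(1) ord by (metis pow_ord_eq_1)
    finally show ?thesis using x(1) by simp
  qed
  have "(\<lambda>k. x [^] k) ` {0..<?N} = carrier G"
  proof (intro equalityI subsetI)
    fix g assume "g \<in> carrier G"
    then obtain k :: nat where "g = x [^] k"
      using generate_pow_nat[OF x(1)] gen ord N by auto
    then show "g \<in> (\<lambda>k. x [^] k) ` {0..<?N}"
      using pow_mod N by (metis atLeastLessThan_iff image_eqI mod_less_divisor zero_le)
  qed (use x(1) in auto)
  moreover have "inj_on (\<lambda>k. x [^] k) {0..<?N}"
    using calculation by (intro eq_card_imp_inj_on) simp_all
  ultimately show ?thesis
    using that x(1) pow_mod by (simp add: bij_betw_def)
qed

definition pow_layers :: "('a, 'b) monoid_scheme \<Rightarrow> 'a \<Rightarrow> nat \<times> nat \<Rightarrow> 'a \<times> nat" where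
  "pow_layers G x = (\<lambda>(k, i). (x [^]\<^bsub>G\<^esub> k, i))"

context group
begin

context
  fixes x :: 'a and N :: nat
  assumes x: "x \<in> carrier G"
    and pow_bij: "bij_betw (\<lambda>k. x [^] k) {0..<N} (carrier G)"
    and pow_mod: "\<And>k. x [^] (k mod N) = x [^] k"
begin

lemma inj_on_pow_layers: "inj_on (pow_layers G x) (Delta_verts N m)"
  using bij_betw_imp_inj_on[OF pow_bij] by (auto simp: inj_on_def pow_layers_def Delta_verts_def)

lemma image_pow_layers: "pow_layers G x ` Delta_verts N m = carrier G \<times> {0..<m}"
  using bij_betw_imp_surj_on[OF pow_bij] by (force simp: pow_layers_def Delta_verts_def)

lemma conj_perm_pow_layers_right_transl:
  "conj_perm (Delta_verts N m) (pow_layers G x) (right_transl N m k) = right_mult_perm G m (x [^] k)"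
proof
  fix v
  show "conj_perm (Delta_verts N m) (pow_layers G x) (right_transl N m k) v = right_mult_perm G m (x [^] k) v"
  proof (cases "v \<in> carrier G \<times> {0..<m}")
    case True
    then have "v \<in> pow_layers G x ` Delta_verts N m"
      using image_pow_layers by simp
    then obtain a i where ai: "a < N" "i < m" "v = pow_layers G x (a, i)"
      by (auto simp: Delta_verts_def)
    have ai_mem: "(a, i) \<in> Delta_verts N m"
      using ai by (simp add: Delta_verts_def)
    then have "conj_perm (Delta_verts N m) (pow_layers G x) (right_transl N m k) v
        = pow_layers G x ((a + k) mod N, i)"
      using ai(3) conj_perm_image[OF inj_on_pow_layers ai_mem] by (simp add: right_transl_def)
    also have "\<dots> = (x [^] a \<otimes> x [^] k, i)"
      using x pow_mod[of "a + k"] by (simp add: pow_layers_def nat_pow_mult)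
    also have "\<dots> = right_mult_perm G m (x [^] k) v"
      using ai x by (simp add: pow_layers_def right_mult_perm_def)
    finally show ?thesis .
  next
    case False
    then show ?thesis
      using image_pow_layers by (simp add: conj_perm_def right_mult_perm_def)
  qed
qed

end

lemma cyclic_group_has_mGRR:
  assumes "cyclic_group G" "finite (carrier G)" "3 \<le> card (carrier G)" "5 \<le> m"
  shows "\<exists>(V :: ('a \<times> nat) set) E. is_mGRR m G V E"
proof -
  interpret comm_group G
    using cyclic_imp_abelian_group[OF assms(1)] .
  let ?N = "card (carrier G)"
  obtain x where x: "x \<in> carrier G" and pow_bij: "bij_betw (\<lambda>k. x [^] k) {0..<?N} (carrier G)"
    and pow_mod: "\<And>k. x [^] (k mod ?N) = x [^] k"
    using cyclic_group_pow_bij[OF assms(1,2)] by blast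
  note pow_layers = inj_on_pow_layers[OF x pow_bij pow_mod] image_pow_layers[OF x pow_bij pow_mod]
  interpret \<Delta>: Delta_rigid ?N m 0
    using assms(3,4) by unfold_locales auto
  let ?E = "transport_adj (Delta_verts ?N m) (Delta_adj ?N m 0) (pow_layers G x)"
  have "graph_auts (carrier G \<times> {0..<m}) ?E
      = conj_perm (Delta_verts ?N m) (pow_layers G x) ` right_transl ?N m ` {0..<?N}"
    using graph_auts_transport[OF pow_layers(1)] \<Delta>.graph_auts_Delta pow_layers(2) by simp
  also have "\<dots> = right_mult_perm G m ` (\<lambda>k. x [^] k) ` {0..<?N}"
    by (simp add: image_image conj_perm_pow_layers_right_transl[OF x pow_bij pow_mod])
  also have "\<dots> = right_mult_perm G m ` carrier G"
    using bij_betw_imp_surj_on[OF pow_bij] by simp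
  finally have "is_mGRR m G (carrier G \<times> {0..<m}) ?E"
    using assms(4) pow_layers(2) simple_graph_transport[OF pow_layers(1) \<Delta>.simple_graph_Delta]
      regular_graph_transport[OF pow_layers(1) \<Delta>.regular_graph_Delta]
    by (intro is_mGRR_if_graph_auts_right_mult) simp_all
  then show ?thesis by blast
qed

end

theorem lemma4p7:
  fixes n m \<delta> :: nat
  assumes "n \<ge> 3" and "m \<ge> 5" and "\<delta> < n" and "coprime (1 + \<delta>) n"
  shows "graph_auts (Delta_verts n m) (Delta_adj n m \<delta>) = right_transl n m ` {0..<n}
    \<and> (\<forall>(G :: ('a, 'b) monoid_scheme) (m' :: nat).
         group G \<and> cyclic_group G \<and> finite (carrier G) \<and> card (carrier G) \<ge> 3 \<and> m' \<ge> 5 \<longrightarrow>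
         (\<exists>(V :: ('a \<times> nat) set) E. is_mGRR m' G V E))"
proof -
  have "1 + \<delta> \<noteq> n"
    using assms(1,4) by auto
  then interpret Delta_rigid n m \<delta>
    using assms(1-3) by unfold_locales auto
  show ?thesis
    using graph_auts_Delta group.cyclic_group_has_mGRR by blast
qed

end
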